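(* In the Poisson algebra $\mathbb C[\mathfrak Z_d]$ one has, for all $r,s$ for which the elements are defined, $\{a_r,a_s\}=0$, $\{a_r,b_s\}=r\,b_{r+s-1}$, and for $r\ge s$, $\{b_r,b_s\}=\sum_{m=s}^{r-1}b_m b_{r+s-m-1}$.
   Context: Let $V=\mathbb C^d$. Let $\mathfrak a=(\mathfrak{gl}(V)\ltimes V)\oplus(\mathfrak{gl}(V)\ltimes V^* )$ with basis $e_{ij}$ (standard matrix units of the first copy of $\mathfrak{gl}(V)$), $e'_{ij}$ (standard matrix units of the second copy), $q_i$ (a basis of $V$), $p_i$ (a basis of $V^*$), $1\le i,j\le d$, with brackets the standard $\mathfrak{gl}$ brackets among the $e_{ij}$ and among the $e'_{ij}$, $[e_{ij},q_k]=\delta_{jk}q_i$, $[e'_{ij},p_k]=-\delta_{ki}p_j$, and all other brackets of basis elements ($[e_{ij},e'_{kl}],[e_{ij},p_k],[e'_{ij},q_k],[p_k,q_l],[q_k,q_l],[p_k,p_l]$) zero. The symmetric algebra $S(\mathfrak a)=\mathbb C[\mathfrak a^*]$ carries the Lie–Poisson bracket. Let $\mathfrak{gl}(V)_{\rm diag}$ be spanned by $e_{ij}+e'_{ij}$. Define the Poisson algebra (Hamiltonian reduction) $\mathbb C[\mathfrak Z_d]:=\big(S(\mathfrak a)/S(\mathfrak a)\mathfrak{gl}(V)_{\rm diag}\big)^{\mathfrak{gl}(V)_{\rm diag}}$ with the induced bracket; it is identified with $\mathbb C[e_{ij},q_i,p_i]^{\mathfrak{gl}(V)}$. Set $a_r=\sum_{i_1,\dots,i_r}e_{i_1i_2}e_{i_2i_3}\cdots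 e_{i_ri_1}$ ($r\ge1$) and $b_s=\sum_{i_1,\dots,i_{s+1}}p_{i_1}e_{i_1i_2}\cdots e_{i_si_{s+1}}q_{i_{s+1}}$ ($s\ge 0$). *)

theory Defs
  imports Complex_Main "HOL-Library.Poly_Mapping"
begin

text \<open>Basis of the Lie algebra a = (gl(V) x| V) + (gl(V) x| V^*), indices 0..d-1:
  E i j = e_ij, E' i j = e'_ij, Q i = q_i, P i = p_i.\<close>
datatype var = E nat nat | E' nat nat | Q nat | P nat

text \<open>Polynomials over complex numbers in the variables var (symmetric algebra S(a)).\<close>
type_synonym poly = "(var \<Rightarrow>\<^sub>0 nat) \<Rightarrow>\<^sub>0 complex"

definition X :: "var \<Rightarrow> poly" where
  "X v = Poly_Mapping.single (Poly_Mapping.single v 1) 1"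

definition pd :: "var \<Rightarrow> poly \<Rightarrow> poly" where
  "pd v f = (\<Sum>m\<in>Poly_Mapping.keys f. Poly_Mapping.single (m - Poly_Mapping.single v (1::nat))
      (of_nat (Poly_Mapping.lookup m v) * Poly_Mapping.lookup f m :: complex))"

definition vars :: "nat \<Rightarrow> var set" where
  "vars d = (\<lambda>(i,j). E i j) ` ({..<d} \<times> {..<d}) \<union> (\<lambda>(i,j). E' i j) ` ({..<d} \<times> {..<d})
            \<union> Q ` {..<d} \<union> P ` {..<d}"

definition kd :: "nat \<Rightarrow> nat \<Rightarrow> poly" where
  "kd i j = (if i = j then 1 else 0)"

fun lie :: "var \<Rightarrow> var \<Rightarrow> poly" where
  "lie (E i j) (E k l) = kd j k * X (E i l) - kd l i * X (E k j)"
| "lie (E' i j) (E' k l) = kd j k * X (E' i l) - kd l i * X (E' k j)"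
| "lie (E i j) (Q k) = kd j k * X (Q i)"
| "lie (Q k) (E i j) = - (kd j k * X (Q i))"
| "lie (E' i j) (P k) = - (kd k i * X (P j))"
| "lie (P k) (E' i j) = kd k i * X (P j)"
| "lie _ _ = 0"

definition pb :: "nat \<Rightarrow> poly \<Rightarrow> poly \<Rightarrow> poly" where
  "pb d f g = (\<Sum>x\<in>vars d. \<Sum>y\<in>vars d. pd x f * pd y g * lie x y)"

text \<open>Congruence modulo the left ideal S(a) gl(V)_diag (S(a) commutative).\<close>
definition cong_diag :: "nat \<Rightarrow> poly \<Rightarrow> poly \<Rightarrow> bool" where
  "cong_diag d f g \<longleftrightarrow> (\<exists>c :: nat \<Rightarrow> nat \<Rightarrow> poly.
      f - g = (\<Sum>i<d. \<Sum>j<d. c i j * (X (E i j) + X (E' i j))))"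

text \<open>Representatives of a_r and b_s (in the e, q, p variables).\<close>
definition a_el :: "nat \<Rightarrow> nat \<Rightarrow> poly" where
  "a_el d r = (\<Sum>is\<in>{is. length is = r \<and> set is \<subseteq> {..<d}}.
                 \<Prod>k<r. X (E (is ! k) (is ! ((k + 1) mod r))))"

definition b_el :: "nat \<Rightarrow> nat \<Rightarrow> poly" where
  "b_el d s = (\<Sum>is\<in>{is. length is = s + 1 \<and> set is \<subseteq> {..<d}}.
                 X (P (is ! 0)) * (\<Prod>k<s. X (E (is ! k) (is ! (k + 1)))) * X (Q (is ! s)))"

end

theory Submission
  imports Defs
begin

(* Let E = (e_ij) be the matrix of the first copy of gl(V), q the column and p the row vector of
   variables, so that a_r = tr E^r and b_s = p E^s q. The three relations hold already as identities
   in S(a), before any reduction. Bracketing with e_kl acts on the entries of E^n as a matrix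
   commutator, so tr E^r commutes with every e_kl and hence with tr E^s. Since p commutes with e and
   q, and {tr E^r, q} = r E^(r-1) q, the second relation follows. For the third,
   {q_i, (E^s q)_j} = - sum_{a<s} (E^a q)_j (E^(s-1-a) q)_i gives
   {b_r, b_s} = sum_{c<r} b_c b_(r+s-1-c) - sum_{c<s} b_c b_(r+s-1-c), which telescopes. *)

section \<open>Partial derivatives\<close>

lemma diff_single_eq_iff:
  assumes "Poly_Mapping.lookup m v \<noteq> 0"
  shows "m - Poly_Mapping.single v 1 = n \<longleftrightarrow> m = n + Poly_Mapping.single v (1::nat)"
proof
  assume "m - Poly_Mapping.single v 1 = n"
  then show "m = n + Poly_Mapping.single v 1"
    using assms by (auto intro!: poly_mapping_eqI simp: lookup_minus lookup_add lookup_single when_def)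
qed (simp add: add.commute)

lemma lookup_pd:
  "Poly_Mapping.lookup (pd v f) n
     = of_nat (Poly_Mapping.lookup n v + 1) * Poly_Mapping.lookup f (n + Poly_Mapping.single v 1)"
proof -
  let ?sv = "Poly_Mapping.single v (1::nat)"
  have "Poly_Mapping.lookup (pd v f) n
      = (\<Sum>m\<in>Poly_Mapping.keys f. of_nat (Poly_Mapping.lookup m v) * Poly_Mapping.lookup f m when m - ?sv = n)"
    by (simp add: pd_def lookup_sum lookup_single)
  also have "\<dots> = (\<Sum>m\<in>Poly_Mapping.keys f.
      if m = n + ?sv then of_nat (Poly_Mapping.lookup n v + 1) * Poly_Mapping.lookup f m else 0)"
  proof (intro sum.cong refl)
    fix m
    show "(of_nat (Poly_Mapping.lookup m v) * Poly_Mapping.lookup f m when m - ?sv = n)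
        = (if m = n + ?sv then of_nat (Poly_Mapping.lookup n v + 1) * Poly_Mapping.lookup f m else 0)"
    proof (cases "Poly_Mapping.lookup m v = 0")
      case True
      then show ?thesis by (auto simp: when_def lookup_add)
    next
      case False
      then show ?thesis using diff_single_eq_iff[OF False, of n] by (auto simp: when_def lookup_add)
    qed
  qed
  also have "\<dots> = of_nat (Poly_Mapping.lookup n v + 1) * Poly_Mapping.lookup f (n + ?sv)"
    by (simp add: sum.delta' in_keys_iff)
  finally show ?thesis .
qed

lemma pd_add: "pd v (f + g) = pd v f + pd v g"
  by (rule poly_mapping_eqI) (simp add: lookup_pd lookup_add algebra_simps)

lemma pd_0 [simp]: "pd v 0 = 0"
  by (simp add: pd_def)

lemma pd_sum: "pd v (sum F A) = (\<Sum>a\<in>A. pd v (F a))"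
  by (induction A rule: infinite_finite_induct) (simp_all add: pd_add)

lemma pd_single:
  "pd v (Poly_Mapping.single m c)
     = Poly_Mapping.single (m - Poly_Mapping.single v 1) (of_nat (Poly_Mapping.lookup m v) * c)"
  by (cases "c = 0") (simp_all add: pd_def)

lemma diff_single_add_comm:
  assumes "Poly_Mapping.lookup m v \<noteq> 0"
  shows "m - Poly_Mapping.single v 1 + n = m + n - Poly_Mapping.single v (1::nat)"
  using assms by (auto intro!: poly_mapping_eqI simp: lookup_minus lookup_add lookup_single when_def)

lemma pd_mult_single:
  "pd v (Poly_Mapping.single m a * Poly_Mapping.single n b)
     = pd v (Poly_Mapping.single m a) * Poly_Mapping.single n b
       + Poly_Mapping.single m a * pd v (Poly_Mapping.single n b)"
proof -
  let ?sv = "Poly_Mapping.single v (1::nat)"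
  have m: "Poly_Mapping.single (m - ?sv + n) (of_nat (Poly_Mapping.lookup m v) * a * b)
        = Poly_Mapping.single (m + n - ?sv) (of_nat (Poly_Mapping.lookup m v) * a * b)"
    using diff_single_add_comm[of m v n] by (cases "Poly_Mapping.lookup m v = 0") simp_all
  have n: "Poly_Mapping.single (m + (n - ?sv)) (a * (of_nat (Poly_Mapping.lookup n v) * b))
        = Poly_Mapping.single (m + n - ?sv) (of_nat (Poly_Mapping.lookup n v) * a * b)"
    using diff_single_add_comm[of n v m]
    by (cases "Poly_Mapping.lookup n v = 0") (simp_all add: add.commute mult_ac)
  have "pd v (Poly_Mapping.single m a * Poly_Mapping.single n b) = Poly_Mapping.single (m + n - ?sv)
      (of_nat (Poly_Mapping.lookup m v) * a * b + of_nat (Poly_Mapping.lookup n v) * a * b)"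
    by (simp add: mult_single pd_single lookup_add algebra_simps)
  also have "\<dots> = Poly_Mapping.single (m - ?sv + n) (of_nat (Poly_Mapping.lookup m v) * a * b)
      + Poly_Mapping.single (m + (n - ?sv)) (a * (of_nat (Poly_Mapping.lookup n v) * b))"
    unfolding m n single_add ..
  finally show ?thesis
    by (simp only: mult_single pd_single)
qed

lemma pd_mult: "pd v (f * g) = pd v f * g + f * pd v g"
proof -
  define F where "F m = Poly_Mapping.single m (Poly_Mapping.lookup f m)" for m
  define G where "G m = Poly_Mapping.single m (Poly_Mapping.lookup g m)" for m
  have decomp: "h = (\<Sum>m\<in>Poly_Mapping.keys h. Poly_Mapping.single m (Poly_Mapping.lookup h m))"
    for h :: poly
    by (rule poly_mapping_eqI) (simp add: lookup_sum lookup_single when_def sum.delta' in_keys_iff)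
  have "pd v (sum F (Poly_Mapping.keys f) * sum G (Poly_Mapping.keys g))
      = pd v (sum F (Poly_Mapping.keys f)) * sum G (Poly_Mapping.keys g)
        + sum F (Poly_Mapping.keys f) * pd v (sum G (Poly_Mapping.keys g))"
    by (simp add: sum_distrib_left sum_distrib_right pd_sum F_def G_def pd_mult_single sum.distrib)
  then show ?thesis
    unfolding F_def G_def decomp[symmetric] .
qed

lemma pd_X [simp]: "pd v (X w) = (if v = w then 1 else 0)"
  by (auto simp: X_def pd_single lookup_single)

lemma pd_kd [simp]: "pd v (kd i j) = 0"
  by (simp add: kd_def pd_def)

section \<open>The Lie--Poisson bracket\<close>

lemma vars_E [simp]: "E i j \<in> vars d \<longleftrightarrow> i < d \<and> j < d"
  and vars_Q [simp]: "Q i \<in> vars d \<longleftrightarrow> i < d"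
  and vars_P [simp]: "P i \<in> vars d \<longleftrightarrow> i < d"
  by (auto simp: vars_def)

lemma finite_vars: "finite (vars d)"
  by (simp add: vars_def)

lemma lie_antisym: "lie y x = - lie x y"
  by (cases x; cases y) simp_all

lemma pb_antisym: "pb d f g = - pb d g f"
proof -
  have "pb d g f = (\<Sum>y\<in>vars d. \<Sum>x\<in>vars d. pd x g * pd y f * lie x y)"
    unfolding pb_def by (rule sum.swap)
  also have "\<dots> = (\<Sum>y\<in>vars d. \<Sum>x\<in>vars d. - (pd y f * pd x g * lie y x))"
    by (intro sum.cong refl) (subst lie_antisym, simp add: algebra_simps)
  also have "\<dots> = - pb d f g"
    unfolding pb_def by (simp add: sum_negf)
  finally show ?thesis by simp
qed

lemma pb_add_left: "pb d (f + g) h = pb d f h + pb d g h"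
  and pb_add_right: "pb d h (f + g) = pb d h f + pb d h g"
  by (simp_all add: pb_def pd_add algebra_simps sum.distrib)

lemma pb_0_left [simp]: "pb d 0 h = 0"
  and pb_0_right [simp]: "pb d h 0 = 0"
  by (simp_all add: pb_def)

lemma pb_sum_left: "pb d (sum F A) h = (\<Sum>a\<in>A. pb d (F a) h)"
  and pb_sum_right: "pb d h (sum F A) = (\<Sum>a\<in>A. pb d h (F a))"
  by (induction A rule: infinite_finite_induct) (simp_all add: pb_add_left pb_add_right)

lemma pb_mult_left: "pb d (f * g) h = f * pb d g h + g * pb d f h"
  and pb_mult_right: "pb d h (f * g) = f * pb d h g + g * pb d h f"
  by (simp_all add: pb_def pd_mult algebra_simps sum.distrib sum_distrib_left)

lemma pb_kd_left [simp]: "pb d (kd i j) h = 0"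
  and pb_kd_right [simp]: "pb d h (kd i j) = 0"
  by (simp_all add: pb_def)

lemma pb_X [simp]:
  assumes "x \<in> vars d" "y \<in> vars d"
  shows "pb d (X x) (X y) = lie x y"
proof -
  have "pb d (X x) (X y) = (\<Sum>x'\<in>vars d. if x' = x then
      (\<Sum>y'\<in>vars d. if y' = y then lie x' y' else 0) else 0)"
    unfolding pb_def by (intro sum.cong refl) (auto intro!: sum.cong)
  then show ?thesis
    using assms by (simp add: sum.delta finite_vars)
qed

lemma kd_mult_eq_if: "kd i j * a = (if i = j then a else 0)" "a * kd i j = (if i = j then a else 0)"
  by (simp_all add: kd_def)

lemma sum_kd [simp]:
  assumes "k < d"
  shows "(\<Sum>m<d. kd m k * f m) = f k" "(\<Sum>m<d. kd k m * f m) = f k"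
    "(\<Sum>m<d. f m * kd m k) = f k" "(\<Sum>m<d. f m * kd k m) = f k"
  using assms by (simp_all add: kd_mult_eq_if sum.delta sum.delta')

section \<open>Powers of the matrix of the \<open>e\<^sub>i\<^sub>j\<close>\<close>

(* epow_apply d g n i is the i-th entry of E^n g, and epow d n i j the (i, j) entry of E^n. *)

fun epow_apply :: "nat \<Rightarrow> (nat \<Rightarrow> poly) \<Rightarrow> nat \<Rightarrow> nat \<Rightarrow> poly" where
  "epow_apply d g 0 i = g i"
| "epow_apply d g (Suc n) i = (\<Sum>m<d. X (E i m) * epow_apply d g n m)"

definition epow :: "nat \<Rightarrow> nat \<Rightarrow> nat \<Rightarrow> nat \<Rightarrow> poly" where
  "epow d n i j = epow_apply d (\<lambda>m. kd m j) n i"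

abbreviation epow_q :: "nat \<Rightarrow> nat \<Rightarrow> nat \<Rightarrow> poly" where
  "epow_q d n i \<equiv> epow_apply d (\<lambda>j. X (Q j)) n i"

definition tr_epow :: "nat \<Rightarrow> nat \<Rightarrow> poly" where
  "tr_epow d r = (\<Sum>i<d. epow d r i i)"

definition p_epow_q :: "nat \<Rightarrow> nat \<Rightarrow> poly" where
  "p_epow_q d s = (\<Sum>i<d. X (P i) * epow_q d s i)"

lemma epow_0: "epow d 0 i j = kd i j"
  by (simp add: epow_def)

lemma epow_Suc: "epow d (Suc n) i j = (\<Sum>m<d. X (E i m) * epow d n m j)"
  by (simp add: epow_def)

lemma epow_mult_epow_apply:
  "i < d \<Longrightarrow> (\<Sum>j<d. epow d a i j * epow_apply d g b j) = epow_apply d g (a + b) i"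
proof (induction a arbitrary: i)
  case 0
  then show ?case by (simp add: epow_0)
next
  case (Suc a)
  have "(\<Sum>j<d. epow d (Suc a) i j * epow_apply d g b j)
      = (\<Sum>j<d. \<Sum>m<d. X (E i m) * (epow d a m j * epow_apply d g b j))"
    by (simp add: epow_Suc sum_distrib_right mult.assoc)
  also have "\<dots> = (\<Sum>m<d. X (E i m) * (\<Sum>j<d. epow d a m j * epow_apply d g b j))"
    by (subst sum.swap) (simp add: sum_distrib_left)
  also have "\<dots> = (\<Sum>m<d. X (E i m) * epow_apply d g (a + b) m)"
    by (intro sum.cong refl) (simp add: Suc.IH)
  finally show ?case by simp
qed

lemma pb_epow_apply_eq_0:
  assumes "\<And>i j. i < d \<Longrightarrow> j < d \<Longrightarrow> pb d h (X (E i j)) = 0"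
    and "\<And>j. j < d \<Longrightarrow> pb d h (g j) = 0"
    and "i < d"
  shows "pb d h (epow_apply d g n i) = 0"
  using assms(3) by (induction n arbitrary: i) (simp_all add: assms(1,2) pb_sum_right pb_mult_right)

lemma pb_epow_E:
  "i < d \<Longrightarrow> j < d \<Longrightarrow> k < d \<Longrightarrow> l < d \<Longrightarrow>
    pb d (epow d n i j) (X (E k l)) = kd j k * epow d n i l - kd l i * epow d n k j"
proof (induction n arbitrary: i)
  case 0
  then show ?case by (simp add: epow_0, simp add: kd_def)
next
  case (Suc n)
  have "pb d (epow d (Suc n) i j) (X (E k l)) =
     (\<Sum>m<d. kd j k * (X (E i m) * epow d n m l) + kd m k * (epow d n m j * X (E i l))
            - (X (E i m) * epow d n k j) * kd l m - kd l i * (X (E k m) * epow d n m j))"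
    unfolding epow_Suc pb_sum_left
    by (intro sum.cong refl) (simp add: pb_mult_left Suc algebra_simps)
  also have "\<dots> = kd j k * (\<Sum>m<d. X (E i m) * epow d n m l)
      + (\<Sum>m<d. kd m k * (epow d n m j * X (E i l)))
      - (\<Sum>m<d. (X (E i m) * epow d n k j) * kd l m) - kd l i * (\<Sum>m<d. X (E k m) * epow d n m j)"
    by (simp add: sum.distrib sum_subtractf sum_distrib_left)
  also have "\<dots> = kd j k * epow d (Suc n) i l - kd l i * epow d (Suc n) k j"
    using Suc by (simp add: epow_Suc mult.commute)
  finally show ?case .
qed

lemma pb_Q_epow:
  "i < d \<Longrightarrow> j < d \<Longrightarrow> k < d \<Longrightarrow>
    pb d (X (Q k)) (epow d n i j) = - (\<Sum>a<n. epow_q d a i * epow d (n - Suc a) k j)"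
proof (induction n arbitrary: i)
  case 0
  then show ?case by (simp add: epow_0)
next
  case (Suc n)
  have "pb d (X (Q k)) (epow d (Suc n) i j) =
     (\<Sum>m<d. - (\<Sum>a<n. X (E i m) * epow_q d a m * epow d (n - Suc a) k j)
        - kd m k * (epow d n m j * X (Q i)))"
    unfolding epow_Suc pb_sum_right
    by (intro sum.cong refl) (simp add: pb_mult_right Suc algebra_simps sum_distrib_left)
  also have "\<dots> = - (\<Sum>a<n. \<Sum>m<d. X (E i m) * epow_q d a m * epow d (n - Suc a) k j)
      - epow d n k j * X (Q i)"
    using Suc by (simp add: sum_subtractf sum_negf) (subst sum.swap, simp)
  also have "\<dots> = - (\<Sum>a<n. epow_q d (Suc a) i * epow d (n - Suc a) k j) - epow d n k j * X (Q i)"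
    by (simp add: sum_distrib_right)
  also have "\<dots> = - (\<Sum>a<Suc n. epow_q d a i * epow d (Suc n - Suc a) k j)"
    unfolding sum.lessThan_Suc_shift by (simp add: algebra_simps del: epow_apply.simps(2))
  finally show ?case .
qed

lemma pb_tr_epow_E: "k < d \<Longrightarrow> l < d \<Longrightarrow> pb d (tr_epow d r) (X (E k l)) = 0"
  unfolding tr_epow_def pb_sum_left by (simp add: pb_epow_E sum_subtractf)

lemma pb_tr_epow_Q: "k < d \<Longrightarrow> pb d (tr_epow d r) (X (Q k)) = of_nat r * epow_q d (r - 1) k"
proof -
  assume k: "k < d"
  have "pb d (X (Q k)) (tr_epow d r) = - (\<Sum>a<r. \<Sum>i<d. epow d (r - Suc a) k i * epow_q d a i)"
    unfolding tr_epow_def pb_sum_right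
    by (simp add: pb_Q_epow k sum_negf mult.commute) (subst sum.swap, simp)
  also have "\<dots> = - (\<Sum>a<r. epow_q d (r - 1) k)"
    by (simp add: epow_mult_epow_apply k)
  finally show ?thesis
    by (subst pb_antisym) simp
qed

lemma pb_tr_epow_P: "k < d \<Longrightarrow> pb d (tr_epow d r) (X (P k)) = 0"
proof -
  assume k: "k < d"
  have "pb d (X (P k)) (epow d r i i) = 0" if "i < d" for i
    unfolding epow_def by (rule pb_epow_apply_eq_0) (simp_all add: k that)
  then show ?thesis
    by (subst pb_antisym) (simp add: tr_epow_def pb_sum_right)
qed

lemma pb_tr_epow_tr_epow: "pb d (tr_epow d r) (tr_epow d s) = 0"
proof -
  have "pb d (tr_epow d r) (epow d s i i) = 0" if "i < d" for i
    unfolding epow_def by (rule pb_epow_apply_eq_0) (simp_all add: pb_tr_epow_E that)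
  then show ?thesis by (simp add: tr_epow_def[of d s] pb_sum_right)
qed

lemma pb_tr_epow_epow_q:
  assumes "1 \<le> r" "i < d"
  shows "pb d (tr_epow d r) (epow_q d s i) = of_nat r * epow_q d (r + s - 1) i"
  using assms(2)
proof (induction s arbitrary: i)
  case 0
  then show ?case by (simp add: pb_tr_epow_Q)
next
  case (Suc s)
  have "pb d (tr_epow d r) (epow_q d (Suc s) i)
      = (\<Sum>m<d. X (E i m) * (of_nat r * epow_q d (r + s - 1) m))"
    unfolding epow_apply.simps pb_sum_right
    by (intro sum.cong refl) (simp add: pb_mult_right pb_tr_epow_E Suc Suc.IH)
  also have "\<dots> = of_nat r * epow_q d (Suc (r + s - 1)) i"
    by (simp add: sum_distrib_left mult.left_commute)
  finally show ?case
    using assms(1) by (simp add: Suc_diff_le)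
qed

lemma pb_tr_epow_p_epow_q:
  "1 \<le> r \<Longrightarrow> pb d (tr_epow d r) (p_epow_q d s) = of_nat r * p_epow_q d (r + s - 1)"
  unfolding p_epow_q_def pb_sum_right sum_distrib_left
  by (intro sum.cong refl) (simp add: pb_mult_right pb_tr_epow_epow_q pb_tr_epow_P mult.left_commute)

section \<open>Brackets of the \<open>b\<^sub>s\<close>\<close>

lemma pb_E_epow_q:
  "k < d \<Longrightarrow> l < d \<Longrightarrow> j < d \<Longrightarrow> pb d (X (E k l)) (epow_q d s j) = kd l j * epow_q d s k"
proof (induction s arbitrary: j)
  case 0
  then show ?case by simp
next
  case (Suc s)
  have "pb d (X (E k l)) (epow_q d (Suc s) j) =
     (\<Sum>m<d. (X (E j m) * epow_q d s k) * kd l m + kd l j * (X (E k m) * epow_q d s m)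
        - kd m k * (epow_q d s m * X (E j l)))"
    unfolding epow_apply.simps pb_sum_right
    by (intro sum.cong refl) (simp add: pb_mult_right Suc algebra_simps)
  also have "\<dots> = (\<Sum>m<d. (X (E j m) * epow_q d s k) * kd l m)
      + kd l j * (\<Sum>m<d. X (E k m) * epow_q d s m) - (\<Sum>m<d. kd m k * (epow_q d s m * X (E j l)))"
    by (simp add: sum.distrib sum_subtractf sum_distrib_left)
  also have "\<dots> = kd l j * epow_q d (Suc s) k"
    using Suc.prems by (simp add: mult.commute)
  finally show ?case .
qed

lemma pb_Q_epow_q:
  "i < d \<Longrightarrow> j < d \<Longrightarrow>
    pb d (X (Q i)) (epow_q d s j) = - (\<Sum>a<s. epow_q d a j * epow_q d (s - Suc a) i)"
proof (induction s arbitrary: j)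
  case 0
  then show ?case by simp
next
  case (Suc s)
  have "pb d (X (Q i)) (epow_q d (Suc s) j) =
     (\<Sum>m<d. - (\<Sum>a<s. X (E j m) * epow_q d a m * epow_q d (s - Suc a) i)
        - kd m i * (epow_q d s m * X (Q j)))"
    unfolding epow_apply.simps(2)[of d _ s] pb_sum_right
    by (intro sum.cong refl) (simp add: pb_mult_right Suc algebra_simps sum_distrib_left)
  also have "\<dots> = - (\<Sum>a<s. \<Sum>m<d. X (E j m) * epow_q d a m * epow_q d (s - Suc a) i)
      - epow_q d s i * X (Q j)"
    using Suc.prems by (simp add: sum_subtractf sum_negf) (subst sum.swap, simp)
  also have "\<dots> = - (\<Sum>a<s. epow_q d (Suc a) j * epow_q d (s - Suc a) i) - epow_q d s i * X (Q j)"
    by (simp add: sum_distrib_right)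
  also have "\<dots> = - (\<Sum>a<Suc s. epow_q d a j * epow_q d (Suc s - Suc a) i)"
    unfolding sum.lessThan_Suc_shift by (simp add: algebra_simps del: epow_apply.simps(2))
  finally show ?case .
qed

lemma pb_E_p_epow_q: "k < d \<Longrightarrow> l < d \<Longrightarrow> pb d (X (E k l)) (p_epow_q d s) = X (P l) * epow_q d s k"
proof -
  assume "k < d" "l < d"
  then have "pb d (X (E k l)) (p_epow_q d s) = (\<Sum>i<d. (X (P i) * epow_q d s k) * kd l i)"
    unfolding p_epow_q_def pb_sum_right
    by (intro sum.cong refl) (simp add: pb_mult_right pb_E_epow_q algebra_simps)
  with \<open>l < d\<close> show ?thesis by simp
qed

lemma pb_Q_p_epow_q:
  "i < d \<Longrightarrow> pb d (X (Q i)) (p_epow_q d s) = - (\<Sum>a<s. p_epow_q d a * epow_q d (s - Suc a) i)"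
proof -
  assume i: "i < d"
  have "pb d (X (Q i)) (p_epow_q d s)
      = - (\<Sum>j<d. \<Sum>a<s. X (P j) * epow_q d a j * epow_q d (s - Suc a) i)"
    unfolding p_epow_q_def pb_sum_right sum_negf[symmetric]
    by (intro sum.cong refl) (simp add: pb_mult_right pb_Q_epow_q i sum_distrib_left algebra_simps sum_negf)
  also have "\<dots> = - (\<Sum>a<s. p_epow_q d a * epow_q d (s - Suc a) i)"
    by (subst sum.swap) (simp add: p_epow_q_def sum_distrib_right)
  finally show ?thesis .
qed

lemma pb_P_p_epow_q: "k < d \<Longrightarrow> pb d (X (P k)) (p_epow_q d s) = 0"
proof -
  assume k: "k < d"
  have "pb d (X (P k)) (epow_q d s j) = 0" if "j < d" for j
    by (rule pb_epow_apply_eq_0) (simp_all add: k that)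
  then show ?thesis
    unfolding p_epow_q_def pb_sum_right by (simp add: pb_mult_right k)
qed

lemma pb_epow_q_p_epow_q:
  "i < d \<Longrightarrow> pb d (epow_q d r i) (p_epow_q d s) =
    (\<Sum>c<r. p_epow_q d c * epow_q d (s + r - Suc c) i)
    - (\<Sum>a<s. p_epow_q d a * epow_q d (s + r - Suc a) i)"
proof (induction r arbitrary: i)
  case 0
  then show ?case by (simp add: pb_Q_p_epow_q)
next
  case (Suc r)
  have "pb d (epow_q d (Suc r) i) (p_epow_q d s) =
    (\<Sum>m<d. (\<Sum>c<r. p_epow_q d c * (X (E i m) * epow_q d (s + r - Suc c) m))
      - (\<Sum>a<s. p_epow_q d a * (X (E i m) * epow_q d (s + r - Suc a) m))
      + (X (P m) * epow_q d r m) * epow_q d s i)"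
    unfolding epow_apply.simps(2)[of d _ r] pb_sum_left
    by (intro sum.cong refl) (simp add: pb_mult_left Suc pb_E_p_epow_q algebra_simps sum_distrib_left)
  also have "\<dots> = (\<Sum>c<r. p_epow_q d c * epow_q d (Suc (s + r - Suc c)) i)
      - (\<Sum>a<s. p_epow_q d a * epow_q d (Suc (s + r - Suc a)) i) + p_epow_q d r * epow_q d s i"
    by (simp add: sum.distrib sum_subtractf p_epow_q_def sum_distrib_left sum_distrib_right)
      (subst (1 2) sum.swap, simp)
  also have "\<dots> = (\<Sum>c<Suc r. p_epow_q d c * epow_q d (s + Suc r - Suc c) i)
      - (\<Sum>a<s. p_epow_q d a * epow_q d (s + Suc r - Suc a) i)"
    by (simp add: Suc_diff_Suc)
  finally show ?case .
qed

lemma pb_p_epow_q_p_epow_q: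
  "pb d (p_epow_q d r) (p_epow_q d s) =
    (\<Sum>c<r. p_epow_q d c * p_epow_q d (s + r - Suc c))
    - (\<Sum>a<s. p_epow_q d a * p_epow_q d (s + r - Suc a))"
proof -
  have "pb d (p_epow_q d r) (p_epow_q d s)
      = (\<Sum>i<d. (\<Sum>c<r. p_epow_q d c * (X (P i) * epow_q d (s + r - Suc c) i))
        - (\<Sum>a<s. p_epow_q d a * (X (P i) * epow_q d (s + r - Suc a) i)))"
    unfolding p_epow_q_def[of d r] pb_sum_left
    by (intro sum.cong refl)
      (simp add: pb_mult_left pb_epow_q_p_epow_q pb_P_p_epow_q algebra_simps sum_distrib_left)
  also have "\<dots> = (\<Sum>c<r. p_epow_q d c * p_epow_q d (s + r - Suc c))
      - (\<Sum>a<s. p_epow_q d a * p_epow_q d (s + r - Suc a))"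
    by (simp add: sum_subtractf p_epow_q_def[of d "_ - _"] sum_distrib_left) (subst (1 2) sum.swap, simp)
  finally show ?thesis .
qed

section \<open>Closed-walk and path sums\<close>

lemma sum_lists_length_Suc:
  assumes "finite S"
  shows "(\<Sum>xs\<in>{xs. length xs = Suc n \<and> set xs \<subseteq> S}. f xs)
    = (\<Sum>x\<in>S. \<Sum>xs\<in>{xs. length xs = n \<and> set xs \<subseteq> S}. f (x # xs))"
proof -
  have "(\<Sum>xs\<in>{xs. set xs \<subseteq> S \<and> length xs = Suc n}. f xs)
      = (\<Sum>xs\<in>{xs. set xs \<subseteq> S \<and> length xs = n}. \<Sum>x\<in>S. f (x # xs))"
    unfolding lists_length_Suc_eq sum.reindex[OF inj_split_Cons]
    by (simp add: sum.cartesian_product split_def)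
  then show ?thesis
    by (simp add: conj_commute sum.swap[of _ S])
qed

lemma sum_paths_eq_epow_apply:
  "i < d \<Longrightarrow> (\<Sum>xs\<in>{xs. length xs = n \<and> set xs \<subseteq> {..<d}}.
      (\<Prod>k<n. X (E ((i # xs) ! k) (xs ! k))) * g ((i # xs) ! n)) = epow_apply d g n i"
proof (induction n arbitrary: i)
  case 0
  have "{xs. xs = [] \<and> set xs \<subseteq> {..<d}} = {[]}" by auto
  then show ?case by simp
next
  case (Suc n)
  have "(\<Sum>xs\<in>{xs. length xs = Suc n \<and> set xs \<subseteq> {..<d}}.
      (\<Prod>k<Suc n. X (E ((i # xs) ! k) (xs ! k))) * g ((i # xs) ! Suc n))
    = (\<Sum>x<d. X (E i x) * (\<Sum>xs\<in>{xs. length xs = n \<and> set xs \<subseteq> {..<d}}.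
      (\<Prod>k<n. X (E ((x # xs) ! k) (xs ! k))) * g ((x # xs) ! n)))"
    by (simp add: sum_lists_length_Suc prod.lessThan_Suc_shift mult.assoc sum_distrib_left
        del: prod.lessThan_Suc)
  also have "\<dots> = epow_apply d g (Suc n) i"
    by (simp add: Suc.IH)
  finally show ?case .
qed

lemma epow_apply_Suc_right:
  "epow_apply d g (Suc n) i = epow_apply d (\<lambda>j. \<Sum>m<d. X (E j m) * g m) n i"
  by (induction n arbitrary: i) simp_all

lemma b_el_eq_p_epow_q: "b_el d s = p_epow_q d s"
proof -
  have "b_el d s = (\<Sum>i<d. X (P i) * (\<Sum>xs\<in>{xs. length xs = s \<and> set xs \<subseteq> {..<d}}.
      (\<Prod>k<s. X (E ((i # xs) ! k) (xs ! k))) * X (Q ((i # xs) ! s))))"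
    unfolding b_el_def by (simp add: sum_lists_length_Suc mult.assoc sum_distrib_left)
  also have "\<dots> = p_epow_q d s"
    unfolding p_epow_q_def
    by (intro sum.cong refl) (simp add: sum_paths_eq_epow_apply[where g = "\<lambda>j. X (Q j)"])
  finally show ?thesis .
qed

lemma a_el_eq_tr_epow:
  assumes "1 \<le> r"
  shows "a_el d r = tr_epow d r"
proof -
  obtain n where r: "r = Suc n"
    using assms by (cases r) auto
  have cycle: "(\<Prod>k<Suc n. X (E ((i # xs) ! k) ((i # xs) ! ((k + 1) mod Suc n))))
     = (\<Prod>k<n. X (E ((i # xs) ! k) ((i # xs) ! (k + 1)))) * X (E ((i # xs) ! n) i)" for i xs
    by (simp add: prod.lessThan_Suc)
  have "a_el d r = (\<Sum>i<d. epow_apply d (\<lambda>j. X (E j i)) n i)"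
    unfolding a_el_def r sum_lists_length_Suc[OF finite_lessThan] cycle
  proof (intro sum.cong refl)
    fix i
    assume "i \<in> {..<d}"
    then show "(\<Sum>xs\<in>{xs. length xs = n \<and> set xs \<subseteq> {..<d}}.
        (\<Prod>k<n. X (E ((i # xs) ! k) ((i # xs) ! (k + 1)))) * X (E ((i # xs) ! n) i))
      = epow_apply d (\<lambda>j. X (E j i)) n i"
      using sum_paths_eq_epow_apply[where g = "\<lambda>j. X (E j i)"] by simp
  qed
  also have "\<dots> = tr_epow d r"
    unfolding tr_epow_def epow_def r epow_apply_Suc_right by simp
  finally show ?thesis .
qed

lemma eq_imp_cong_diag: "f = g \<Longrightarrow> cong_diag d f g"
  unfolding cong_diag_def by (rule exI[of _ "\<lambda>_ _. 0"]) simp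

theorem proposition3p6:
  fixes d :: nat
  shows "(\<forall>r s. r \<ge> 1 \<longrightarrow> s \<ge> 1 \<longrightarrow> cong_diag d (pb d (a_el d r) (a_el d s)) 0)
       \<and> (\<forall>r s. r \<ge> 1 \<longrightarrow>
            cong_diag d (pb d (a_el d r) (b_el d s)) (of_nat r * b_el d (r + s - 1)))
       \<and> (\<forall>r s. s \<le> r \<longrightarrow>
            cong_diag d (pb d (b_el d r) (b_el d s))
              (\<Sum>m=s..<r. b_el d m * b_el d (r + s - m - 1)))"
proof (intro conjI allI impI)
  fix r s :: nat
  assume "1 \<le> r" "1 \<le> s"
  then show "cong_diag d (pb d (a_el d r) (a_el d s)) 0"
    by (intro eq_imp_cong_diag) (simp add: a_el_eq_tr_epow pb_tr_epow_tr_epow)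
next
  fix r s :: nat
  assume "1 \<le> r"
  then show "cong_diag d (pb d (a_el d r) (b_el d s)) (of_nat r * b_el d (r + s - 1))"
    by (intro eq_imp_cong_diag) (simp add: a_el_eq_tr_epow b_el_eq_p_epow_q pb_tr_epow_p_epow_q)
next
  fix r s :: nat
  assume "s \<le> r"
  let ?f = "\<lambda>m. p_epow_q d m * p_epow_q d (r + s - m - 1)"
  have "pb d (b_el d r) (b_el d s) = sum ?f {0..<r} - sum ?f {0..<s}"
    by (simp add: b_el_eq_p_epow_q pb_p_epow_q_p_epow_q atLeast0LessThan add.commute)
  also have "\<dots> = (\<Sum>m=s..<r. b_el d m * b_el d (r + s - m - 1))"
    using \<open>s \<le> r\<close> by (simp add: sum_diff_nat_ivl b_el_eq_p_epow_q)
  finally show "cong_diag d (pb d (b_el d r) (b_el d s)) (\<Sum>m=s..<r. b_el d m * b_el d (r + s - m - 1))"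
    by (rule eq_imp_cong_diag)
qed

end
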